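(* Let $\omega$ be a primitive third root of unity, $S=\mathbb{C}\langle x,y,z\rangle/(x^2,y^2,z^2)$, and for $t\in\mathbb{C}^*$ let $T_t$ be the quotient of $S$ by the two-sided ideal generated by $(zxy+\omega xyz+\omega^2 yzx)+t(yxz+\omega zyx+\omega^2 xzy)$ and $(zxy+\omega^2 xyz+\omega yzx)+t(yxz+\omega^2 zyx+\omega xzy)$; let $M_t=T_t/(g_t)$ with $g_t=(zxy+xyz+yzx)+t(yxz+zyx+xzy)$. Then for $t\in\mathbb{C}^*$, $M_t$ has no nonzero homogeneous central elements of odd degree.
   Context: Grading: $\deg x=\deg y=\deg z=1$. *)

theory Defs
  imports Complex_Main
begin

text \<open>The free algebra C<x,y,z>: elements are finitely supported functions from words
  over the alphabet {x,y,z} to complex coefficients; product is concatenation convolution.\<close>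

datatype gen = X | Y | Z

type_synonym ncpoly = "gen list \<Rightarrow> complex"

definition fin_supp :: "ncpoly \<Rightarrow> bool" where
  "fin_supp p \<longleftrightarrow> finite {w. p w \<noteq> 0}"

definition ncadd :: "ncpoly \<Rightarrow> ncpoly \<Rightarrow> ncpoly" where
  "ncadd p q = (\<lambda>w. p w + q w)"

definition ncdiff :: "ncpoly \<Rightarrow> ncpoly \<Rightarrow> ncpoly" where
  "ncdiff p q = (\<lambda>w. p w - q w)"

definition ncmul :: "ncpoly \<Rightarrow> ncpoly \<Rightarrow> ncpoly" where
  "ncmul p q = (\<lambda>w. \<Sum>(u, v) \<in> {(u, v). u @ v = w}. p u * q v)"

definition lc :: "(complex \<times> gen list) list \<Rightarrow> ncpoly" where
  "lc l = (\<lambda>w. sum_list (map fst (filter (\<lambda>(c, u). u = w) l)))"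

inductive_set ideal_gen :: "ncpoly set \<Rightarrow> ncpoly set" for G where
  zero: "(\<lambda>_. 0) \<in> ideal_gen G"
| gen: "\<lbrakk>g \<in> G; fin_supp a; fin_supp b\<rbrakk> \<Longrightarrow> ncmul (ncmul a g) b \<in> ideal_gen G"
| add: "\<lbrakk>p \<in> ideal_gen G; q \<in> ideal_gen G\<rbrakk> \<Longrightarrow> ncadd p q \<in> ideal_gen G"

definition homogeneous :: "nat \<Rightarrow> ncpoly \<Rightarrow> bool" where
  "homogeneous d p \<longleftrightarrow> fin_supp p \<and> (\<forall>w. p w \<noteq> 0 \<longrightarrow> length w = d)"

text \<open>Relations defining M_t = T_t/(g_t), T_t = S/(r1,r2), S = C<x,y,z>/(x^2,y^2,z^2).\<close>
definition M_rels :: "complex \<Rightarrow> complex \<Rightarrow> ncpoly set" where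
  "M_rels \<omega> t = {
     lc [(1, [X, X])], lc [(1, [Y, Y])], lc [(1, [Z, Z])],
     lc [(1, [Z,X,Y]), (\<omega>, [X,Y,Z]), (\<omega>^2, [Y,Z,X]),
         (t, [Y,X,Z]), (t * \<omega>, [Z,Y,X]), (t * \<omega>^2, [X,Z,Y])],
     lc [(1, [Z,X,Y]), (\<omega>^2, [X,Y,Z]), (\<omega>, [Y,Z,X]),
         (t, [Y,X,Z]), (t * \<omega>^2, [Z,Y,X]), (t * \<omega>, [X,Z,Y])],
     lc [(1, [Z,X,Y]), (1, [X,Y,Z]), (1, [Y,Z,X]),
         (t, [Y,X,Z]), (t, [Z,Y,X]), (t, [X,Z,Y])] }"

definition M_ideal :: "complex \<Rightarrow> complex \<Rightarrow> ncpoly set" where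
  "M_ideal \<omega> t = ideal_gen (M_rels \<omega> t)"

definition central_mod :: "ncpoly set \<Rightarrow> ncpoly \<Rightarrow> bool" where
  "central_mod I f \<longleftrightarrow> (\<forall>a. fin_supp a \<longrightarrow> ncdiff (ncmul f a) (ncmul a f) \<in> I)"

end

theory Submission
  imports Defs
begin

text \<open>
  Because \<open>1 + \<omega> + \<omega>\<^sup>2 = 0\<close>, the two cubic relations of \<open>T\<^sub>t\<close> together with \<open>g\<^sub>t\<close> span the
  three binomials \<open>zxy + t yxz\<close>, \<open>xyz + t zyx\<close>, \<open>yzx + t xzy\<close>. With \<open>x\<^sup>2 = y\<^sup>2 = z\<^sup>2 = 0\<close> a
  word survives in \<open>M\<^sub>t\<close> only if one letter \<open>b\<close> occupies every other position, and the
  binomials then sort the two remaining letters: modulo the ideal every word is a power of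
  \<open>-1/t\<close> times a canonical alternating word, or zero. The coefficients of this normal form are
  linear functionals vanishing on the ideal, so an element lies in the ideal iff all of them
  vanish on it.

  Let \<open>f\<close> be central of odd degree \<open>n\<close> and take the coefficient of a canonical word with \<open>b\<close> at
  the even positions. Pairing it with \<open>fb - bf\<close> and with \<open>fc - cf\<close>, \<open>c\<close> the successor of \<open>b\<close>,
  and using that position \<open>n\<close> is odd, shows that both families of coefficients of \<open>f\<close>
  (\<open>b\<close> at odd and at even positions) vanish.
\<close>

fun next_gen :: "gen \<Rightarrow> gen" where
  "next_gen X = Y" | "next_gen Y = Z" | "next_gen Z = X"

fun prev_gen :: "gen \<Rightarrow> gen" where
  "prev_gen X = Z" | "prev_gen Y = X" | "prev_gen Z = Y"

lemma next_gen_neq [simp]: "next_gen b \<noteq> b" "b \<noteq> next_gen b"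
  by (cases b; simp)+

lemma prev_gen_neq [simp]: "prev_gen b \<noteq> b" "b \<noteq> prev_gen b"
  by (cases b; simp)+

lemma next_gen_neq_prev_gen [simp]: "next_gen b \<noteq> prev_gen b" "prev_gen b \<noteq> next_gen b"
  by (cases b; simp)+

lemma next_prev_gen [simp]: "next_gen (prev_gen b) = b" "prev_gen (next_gen b) = b"
  by (cases b; simp)+

lemma prev_prev_gen_neq: "prev_gen (prev_gen b) \<noteq> b"
  by (cases b) auto

lemma prev_gen_inject: "prev_gen a = prev_gen b \<longleftrightarrow> a = b"
  by (cases a; cases b; simp)

lemma gen_eq_next_gen: "x \<noteq> b \<Longrightarrow> x \<noteq> prev_gen b \<Longrightarrow> x = next_gen b"
  by (cases x; cases b; simp)

lemma gen_eq_third: "x \<noteq> b \<Longrightarrow> x \<noteq> e \<Longrightarrow> s \<noteq> b \<Longrightarrow> s \<noteq> e \<Longrightarrow> b \<noteq> e \<Longrightarrow> x = s"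
  for x s b e :: gen
  by (cases x; cases b; cases e; cases s) auto

lemma gen_distinct_cases:
  "e \<noteq> b \<Longrightarrow> s \<noteq> b \<Longrightarrow> e \<noteq> s \<Longrightarrow>
    (e = prev_gen b \<and> s = next_gen b) \<or> (e = next_gen b \<and> s = prev_gen b)"
  by (cases e; cases b; cases s; simp)

instance gen :: finite
proof
  have UNIV_eq: "(UNIV :: gen set) = {X, Y, Z}"
    using gen.exhaust by auto
  show "finite (UNIV :: gen set)"
    unfolding UNIV_eq by simp
qed


section \<open>Polynomials, monomials and linear functionals\<close>

definition supp :: "ncpoly \<Rightarrow> gen list set" where
  "supp p = {w. p w \<noteq> 0}"

definition mon :: "gen list \<Rightarrow> ncpoly" where
  "mon u = (\<lambda>w. if w = u then 1 else 0)"

definition pairing :: "(gen list \<Rightarrow> complex) \<Rightarrow> ncpoly \<Rightarrow> complex" where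
  "pairing l p = (\<Sum>w\<in>supp p. l w * p w)"

lemma fin_supp_iff_finite_supp: "fin_supp p \<longleftrightarrow> finite (supp p)"
  by (simp add: fin_supp_def supp_def)

lemma supp_mon [simp]: "supp (mon u) = {u}"
  by (auto simp: supp_def mon_def)

lemma fin_supp_mon: "fin_supp (mon u)"
  by (simp add: fin_supp_iff_finite_supp)

lemma splits_eq_image_take_drop: "{(u, v). u @ v = w} = (\<lambda>i. (take i w, drop i w)) ` {0..length w}"
proof (rule set_eqI, rule iffI)
  fix x assume "x \<in> {(u, v). u @ v = w}"
  then obtain u v where "x = (u, v)" "u @ v = w" by auto
  then show "x \<in> (\<lambda>i. (take i w, drop i w)) ` {0..length w}"
    by (intro image_eqI[where x = "length u"]) auto
qed auto

lemma finite_splits: "finite {(u, v). u @ v = w}"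
  by (simp add: splits_eq_image_take_drop)

lemma supp_ncmul: "supp (ncmul p q) \<subseteq> (\<lambda>(u, v). u @ v) ` (supp p \<times> supp q)"
proof
  fix w assume "w \<in> supp (ncmul p q)"
  then have "(\<Sum>(u, v) \<in> {(u, v). u @ v = w}. p u * q v) \<noteq> 0"
    by (simp add: supp_def ncmul_def)
  then obtain u v where "u @ v = w" "p u * q v \<noteq> 0"
    by (auto elim: sum.not_neutral_contains_not_neutral)
  then show "w \<in> (\<lambda>(u, v). u @ v) ` (supp p \<times> supp q)"
    by (auto simp: supp_def image_iff intro!: bexI[where x = "(u, v)"])
qed

lemma fin_supp_ncmul: "fin_supp p \<Longrightarrow> fin_supp q \<Longrightarrow> fin_supp (ncmul p q)"
  unfolding fin_supp_iff_finite_supp using supp_ncmul finite_subset by blast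

lemma fin_supp_ncadd: "fin_supp p \<Longrightarrow> fin_supp q \<Longrightarrow> fin_supp (ncadd p q)"
  unfolding fin_supp_iff_finite_supp
  by (rule finite_subset[of _ "supp p \<union> supp q"]) (auto simp: supp_def ncadd_def)

lemma fin_supp_smult: "fin_supp p \<Longrightarrow> fin_supp (\<lambda>w. c * p w)"
  unfolding fin_supp_def by (rule finite_subset[of _ "{w. p w \<noteq> 0}"]) auto

lemma fin_supp_lc: "fin_supp (lc xs)"
proof -
  have "supp (lc xs) \<subseteq> set (map snd xs)"
  proof
    fix w assume "w \<in> supp (lc xs)"
    then have "filter (\<lambda>(c, u). u = w) xs \<noteq> []" by (auto simp: supp_def lc_def)
    then show "w \<in> set (map snd xs)" by (force simp: filter_empty_conv image_iff)
  qed
  then show ?thesis unfolding fin_supp_iff_finite_supp by (rule finite_subset) simp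
qed

lemma pairing_eq_sum_superset:
  "finite S \<Longrightarrow> supp p \<subseteq> S \<Longrightarrow> pairing l p = (\<Sum>w\<in>S. l w * p w)"
  unfolding pairing_def by (rule sum.mono_neutral_left) (auto simp: supp_def)

lemma pairing_cong: "(\<And>w. w \<in> supp p \<Longrightarrow> l w = l' w) \<Longrightarrow> pairing l p = pairing l' p"
  unfolding pairing_def by (rule sum.cong) auto

lemma pairing_zero [simp]: "pairing l (\<lambda>_. 0) = 0"
  by (simp add: pairing_def supp_def)

lemma pairing_ncadd:
  assumes "fin_supp p" "fin_supp q"
  shows "pairing l (ncadd p q) = pairing l p + pairing l q"
proof -
  let ?S = "supp p \<union> supp q"
  have S: "finite ?S" using assms by (simp add: fin_supp_iff_finite_supp)
  have "pairing l (ncadd p q) = (\<Sum>w\<in>?S. l w * ncadd p q w)"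
    by (rule pairing_eq_sum_superset[OF S]) (auto simp: supp_def ncadd_def)
  also have "\<dots> = (\<Sum>w\<in>?S. l w * p w) + (\<Sum>w\<in>?S. l w * q w)"
    by (simp add: ncadd_def distrib_left sum.distrib)
  finally show ?thesis
    using pairing_eq_sum_superset[OF S, of p l] pairing_eq_sum_superset[OF S, of q l] by auto
qed

lemma pairing_ncdiff:
  assumes "fin_supp p" "fin_supp q"
  shows "pairing l (ncdiff p q) = pairing l p - pairing l q"
proof -
  let ?S = "supp p \<union> supp q"
  have S: "finite ?S" using assms by (simp add: fin_supp_iff_finite_supp)
  have "pairing l (ncdiff p q) = (\<Sum>w\<in>?S. l w * ncdiff p q w)"
    by (rule pairing_eq_sum_superset[OF S]) (auto simp: supp_def ncdiff_def)
  also have "\<dots> = (\<Sum>w\<in>?S. l w * p w) - (\<Sum>w\<in>?S. l w * q w)"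
    by (simp add: ncdiff_def right_diff_distrib sum_subtractf)
  finally show ?thesis
    using pairing_eq_sum_superset[OF S, of p l] pairing_eq_sum_superset[OF S, of q l] by auto
qed

lemma lc_Cons: "lc (x # xs) = ncadd (lc [x]) (lc xs)"
  by (auto simp: lc_def ncadd_def fun_eq_iff split: prod.splits)

lemma pairing_lc: "pairing l (lc xs) = (\<Sum>(c, w)\<leftarrow>xs. c * l w)"
proof (induction xs)
  case Nil
  have "lc [] = (\<lambda>_. 0)" by (simp add: lc_def fun_eq_iff)
  then show ?case by simp
next
  case (Cons x xs)
  obtain c u where x: "x = (c, u)" by force
  have "pairing l (lc [(c, u)]) = (\<Sum>w\<in>{u}. l w * lc [(c, u)] w)"
    by (rule pairing_eq_sum_superset) (auto simp: supp_def lc_def)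
  then have "pairing l (lc [x]) = c * l u" by (simp add: x lc_def)
  then show ?case
    by (subst lc_Cons) (simp add: pairing_ncadd fin_supp_lc Cons x)
qed

lemma pairing_ncmul:
  assumes "fin_supp p" "fin_supp q"
  shows "pairing l (ncmul p q) = (\<Sum>(u, v)\<in>supp p \<times> supp q. l (u @ v) * p u * q v)"
proof -
  let ?A = "supp p \<times> supp q"
  let ?S = "(\<lambda>(u, v). u @ v) ` ?A"
  let ?F = "\<lambda>(u, v). l (u @ v) * p u * q v"
  have A: "finite ?A" using assms by (simp add: fin_supp_iff_finite_supp)
  then have S: "finite ?S" by simp
  have "pairing l (ncmul p q) = (\<Sum>w\<in>?S. l w * ncmul p q w)"
    by (rule pairing_eq_sum_superset[OF S supp_ncmul])
  also have "\<dots> = (\<Sum>w\<in>?S. \<Sum>x\<in>{x\<in>?A. (\<lambda>(u, v). u @ v) x = w}. ?F x)"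
  proof (rule sum.cong[OF refl])
    fix w
    have "ncmul p q w = (\<Sum>x\<in>{x\<in>?A. (\<lambda>(u, v). u @ v) x = w}. (\<lambda>(u, v). p u * q v) x)"
      unfolding ncmul_def
      by (rule sum.mono_neutral_right) (auto simp: finite_splits supp_def)
    then show "l w * ncmul p q w = (\<Sum>x\<in>{x\<in>?A. (\<lambda>(u, v). u @ v) x = w}. ?F x)"
      by (auto simp: sum_distrib_left case_prod_beta mult.assoc intro!: sum.cong)
  qed
  also have "\<dots> = sum ?F ?A"
    by (rule sum.group[OF A S]) auto
  finally show ?thesis .
qed

lemma pairing_ncmul_left:
  assumes "fin_supp p" "fin_supp q"
  shows "pairing l (ncmul p q) = (\<Sum>u\<in>supp p. p u * pairing (\<lambda>v. l (u @ v)) q)"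
  by (subst pairing_ncmul[OF assms])
    (simp add: pairing_def sum_distrib_left mult_ac flip: sum.cartesian_product)

lemma pairing_ncmul_right:
  assumes "fin_supp p" "fin_supp q"
  shows "pairing l (ncmul p q) = (\<Sum>v\<in>supp q. q v * pairing (\<lambda>u. l (u @ v)) p)"
  by (subst pairing_ncmul[OF assms])
    (simp add: pairing_def sum_distrib_left mult_ac sum.swap[of _ "supp p"] flip: sum.cartesian_product)

lemma pairing_ncmul_letter_right:
  "fin_supp p \<Longrightarrow> pairing l (ncmul p (mon [e])) = pairing (\<lambda>u. l (u @ [e])) p"
  by (simp add: pairing_ncmul_right fin_supp_mon) (simp add: mon_def)

lemma pairing_ncmul_letter_left:
  "fin_supp p \<Longrightarrow> pairing l (ncmul (mon [e]) p) = pairing (\<lambda>v. l (e # v)) p"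
  by (simp add: pairing_ncmul_left fin_supp_mon) (simp add: mon_def)

lemma sum_mon_eq: "fin_supp p \<Longrightarrow> (\<Sum>w\<in>supp p. p w * mon w x) = p x"
  unfolding fin_supp_iff_finite_supp mon_def
  by (cases "x \<in> supp p") (auto simp: supp_def if_distrib cong: if_cong)


section \<open>Ideals\<close>

lemma ideal_gen_fin_supp:
  assumes "\<And>g. g \<in> G \<Longrightarrow> fin_supp g" "p \<in> ideal_gen G"
  shows "fin_supp p"
  using assms(2)
proof induction
  case zero
  then show ?case by (simp add: fin_supp_def)
qed (use assms(1) in \<open>auto intro: fin_supp_ncmul fin_supp_ncadd\<close>)

lemma ncmul_smult_left: "ncmul (\<lambda>w. c * p w) q = (\<lambda>w. c * ncmul p q w)"
  by (simp add: ncmul_def sum_distrib_left case_prod_beta mult.assoc)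

lemma ideal_gen_smult: "p \<in> ideal_gen G \<Longrightarrow> (\<lambda>w. c * p w) \<in> ideal_gen G"
proof (induction p rule: ideal_gen.induct)
  case zero
  then show ?case using ideal_gen.zero by simp
next
  case (gen g a b)
  then show ?case
    using ideal_gen.gen[OF gen(1) fin_supp_smult[OF gen(2)] gen(3)] by (simp add: ncmul_smult_left)
next
  case (add p q)
  have "(\<lambda>w. c * ncadd p q w) = ncadd (\<lambda>w. c * p w) (\<lambda>w. c * q w)"
    by (simp add: ncadd_def distrib_left)
  then show ?case using ideal_gen.add[OF add(3,4)] by simp
qed

lemma ideal_gen_lincomb:
  "p \<in> ideal_gen G \<Longrightarrow> q \<in> ideal_gen G \<Longrightarrow> (\<lambda>w. a * p w + b * q w) \<in> ideal_gen G"
  using ideal_gen.add[OF ideal_gen_smult[of p G a] ideal_gen_smult[of q G b]] by (simp add: ncadd_def)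

lemma ideal_gen_sum:
  "finite S \<Longrightarrow> (\<And>x. x \<in> S \<Longrightarrow> F x \<in> ideal_gen G) \<Longrightarrow> (\<lambda>w. \<Sum>x\<in>S. F x w) \<in> ideal_gen G"
proof (induction S rule: finite_induct)
  case empty
  then show ?case using ideal_gen.zero by simp
next
  case (insert x S)
  then have "(\<lambda>w. \<Sum>y\<in>insert x S. F y w) = ncadd (F x) (\<lambda>w. \<Sum>y\<in>S. F y w)"
    by (simp add: ncadd_def)
  then show ?case using ideal_gen.add[of "F x" G "\<lambda>w. \<Sum>y\<in>S. F y w"] insert by simp
qed

definition sandwich :: "gen list \<Rightarrow> ncpoly \<Rightarrow> gen list \<Rightarrow> ncpoly" where
  "sandwich u g v = (\<lambda>x. if \<exists>m. x = u @ m @ v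
     then g (drop (length u) (take (length x - length v) x)) else 0)"

lemma ncmul_mon_left:
  "ncmul (mon u) g = (\<lambda>x. if \<exists>m. x = u @ m then g (drop (length u) x) else 0)"
proof (rule ext)
  fix x
  have "ncmul (mon u) g x
      = (\<Sum>y\<in>{(a, m). a @ m = x}. if y = (u, drop (length u) x) then g (snd y) else 0)"
    unfolding ncmul_def mon_def by (rule sum.cong) (auto split: if_splits)
  also have "\<dots> = (if u @ drop (length u) x = x then g (drop (length u) x) else 0)"
    by (simp add: sum.delta[OF finite_splits])
  finally show "ncmul (mon u) g x = (if \<exists>m. x = u @ m then g (drop (length u) x) else 0)"
    by (metis append_eq_conv_conj)
qed

lemma ncmul_mon_right:
  "ncmul g (mon v) = (\<lambda>x. if \<exists>m. x = m @ v then g (take (length x - length v) x) else 0)"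
proof (rule ext)
  fix x
  have "ncmul g (mon v) x
      = (\<Sum>y\<in>{(a, m). a @ m = x}. if y = (take (length x - length v) x, v) then g (fst y) else 0)"
    unfolding ncmul_def mon_def by (rule sum.cong) (auto split: if_splits)
  also have "\<dots> = (if take (length x - length v) x @ v = x then g (take (length x - length v) x) else 0)"
    by (simp add: sum.delta[OF finite_splits])
  finally show "ncmul g (mon v) x = (if \<exists>m. x = m @ v then g (take (length x - length v) x) else 0)"
    by (metis append_take_drop_id same_append_eq length_append diff_add_inverse2 take_all_iff
        order_refl append_eq_conv_conj)
qed

lemma ncmul_ncmul_mon: "ncmul (ncmul (mon u) g) (mon v) = sandwich u g v"
proof (rule ext)
  fix x
  show "ncmul (ncmul (mon u) g) (mon v) x = sandwich u g v x"
    by (cases "\<exists>m. x = u @ m @ v") (auto simp: ncmul_mon_left ncmul_mon_right sandwich_def)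
qed

lemma sandwich_in_ideal_gen: "g \<in> G \<Longrightarrow> sandwich u g v \<in> ideal_gen G"
  using ideal_gen.gen[OF _ fin_supp_mon fin_supp_mon] by (simp add: ncmul_ncmul_mon)

lemma mon_append_eq_sandwich: "mon (u @ m @ v) = sandwich u (mon m) v"
  by (auto simp: mon_def sandwich_def fun_eq_iff)

lemma sandwich_lincomb:
  "sandwich u (\<lambda>m. a * g m + b * h m) v = (\<lambda>x. a * sandwich u g v x + b * sandwich u h v x)"
  by (auto simp: sandwich_def fun_eq_iff)

lemma sandwich_lincomb3_in_ideal_gen:
  assumes "g1 \<in> G" "g2 \<in> G" "g3 \<in> G"
  shows "sandwich u (\<lambda>m. c1 * g1 m + c2 * g2 m + c3 * g3 m) v \<in> ideal_gen G"
proof -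
  have "(\<lambda>x. 1 * (c1 * sandwich u g1 v x + c2 * sandwich u g2 v x) + c3 * sandwich u g3 v x)
      \<in> ideal_gen G"
    by (intro ideal_gen_lincomb sandwich_in_ideal_gen assms)
  moreover have "sandwich u (\<lambda>m. c1 * g1 m + c2 * g2 m + c3 * g3 m) v
      = (\<lambda>x. 1 * (c1 * sandwich u g1 v x + c2 * sandwich u g2 v x) + c3 * sandwich u g3 v x)"
    by (auto simp: sandwich_def fun_eq_iff)
  ultimately show ?thesis by simp
qed

lemma ideal_gen_binomial_iff:
  assumes "(\<lambda>x. p x + c * q x) \<in> ideal_gen G" "c \<noteq> 0"
  shows "p \<in> ideal_gen G \<longleftrightarrow> q \<in> ideal_gen G"
proof
  assume "p \<in> ideal_gen G"
  from ideal_gen_lincomb[OF assms(1) this, of "1/c" "-1/c"]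
  show "q \<in> ideal_gen G"
    by (rule back_subst) (use assms(2) in \<open>simp add: fun_eq_iff field_simps\<close>)
next
  assume "q \<in> ideal_gen G"
  from ideal_gen_lincomb[OF assms(1) this, of 1 "-c"]
  show "p \<in> ideal_gen G" by simp
qed


section \<open>Alternating words and their normal coefficients\<close>

text \<open>\<open>alternating b q w\<close>: the letter \<open>b\<close> occupies exactly the positions of \<open>w\<close> whose parity is
  even iff \<open>q\<close> (positions counted from 0).\<close>
fun alternating :: "gen \<Rightarrow> bool \<Rightarrow> gen list \<Rightarrow> bool" where
  "alternating b q [] = True"
| "alternating b q (x # xs) \<longleftrightarrow> (x = b) = q \<and> alternating b (\<not> q) xs"

fun inversions :: "gen \<Rightarrow> gen \<Rightarrow> gen list \<Rightarrow> nat" where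
  "inversions s p [] = 0"
| "inversions s p (x # xs) = (if x = s then count_list xs p else 0) + inversions s p xs"

text \<open>The alternating word of length \<open>n\<close> with \<open>k\<close> letters \<open>prev_gen b\<close>, all of them
  preceding the letters \<open>next_gen b\<close>.\<close>
fun canonical_word :: "gen \<Rightarrow> bool \<Rightarrow> nat \<Rightarrow> nat \<Rightarrow> gen list" where
  "canonical_word b q k 0 = []"
| "canonical_word b q k (Suc n) = (if q then b # canonical_word b False k n
     else if k > 0 then prev_gen b # canonical_word b True (k - 1) n
     else next_gen b # canonical_word b True 0 n)"

text \<open>The coefficient of \<open>canonical_word b q k (length w)\<close> in the normal form of \<open>w\<close>: sorting
  \<open>w\<close> moves every letter \<open>next_gen b\<close> past every later \<open>prev_gen b\<close>, at the price of a factor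
  \<open>-1/t\<close> each time.\<close>
definition normal_coeff :: "complex \<Rightarrow> gen \<Rightarrow> bool \<Rightarrow> nat \<Rightarrow> gen list \<Rightarrow> complex" where
  "normal_coeff t b q k w = (if alternating b q w \<and> count_list w (prev_gen b) = k
     then (- 1 / t) ^ inversions (next_gen b) (prev_gen b) w else 0)"

lemma alternating_append:
  "alternating b q (u @ v) \<longleftrightarrow> alternating b q u \<and> alternating b (if even (length u) then q else \<not> q) v"
  by (induction u arbitrary: q) auto

lemma alternating_snoc:
  "alternating b q (u @ [x]) \<longleftrightarrow> alternating b q u \<and> (x = b) = (even (length u) = q)"
  by (auto simp: alternating_append)

lemma alternating_iff_nth: "alternating b q w \<longleftrightarrow> (\<forall>i<length w. (w ! i = b) = (even i = q))"
proof (induction w arbitrary: q)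
  case (Cons x xs)
  have "(\<forall>i<length (x # xs). ((x # xs) ! i = b) = (even i = q))
      \<longleftrightarrow> (x = b) = q \<and> (\<forall>i<length xs. (xs ! i = b) = (even i = (\<not> q)))"
    by (auto simp: All_less_Suc2)
  then show ?case using Cons by simp
qed simp

lemma inversions_append:
  "inversions s p (u @ v) = inversions s p u + count_list u s * count_list v p + inversions s p v"
  by (induction u) (auto simp: algebra_simps)

lemma alternating_other_letter:
  "alternating b q w \<Longrightarrow> set w \<subseteq> {b, x} \<Longrightarrow> x \<noteq> b \<Longrightarrow> alternating x (\<not> q) w"
proof (induction w arbitrary: q)
  case (Cons y w)
  then show ?case using Cons.IH[of "\<not> q"] by auto
qed simp

lemma alternating_ends_with_run:
  assumes "alternating b q (w @ [s])" "s \<noteq> b" "e \<in> set w" "e \<noteq> b" "e \<noteq> s"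
  shows "\<exists>A j. w @ [s] = A @ [e] @ concat (replicate (Suc j) [b, s])"
  using assms
proof (induction w rule: length_induct)
  case (1 w)
  then obtain w' x where w: "w = w' @ [x]"
    by (metis empty_iff list.set(1) rev_exhaust)
  have "alternating b q (w' @ [x]) \<and> (s = b) = (even (length w) = q)"
    using "1.prems"(1) w by (simp only: alternating_snoc)
  then have alt: "alternating b q w'" and "x = b"
    using "1.prems"(2) w by (auto simp: alternating_snoc)
  then have "e \<in> set w'" using "1.prems"(3,4) w by auto
  then obtain w'' y where w': "w' = w'' @ [y]"
    by (metis empty_iff list.set(1) rev_exhaust)
  show ?case
  proof (cases "y = e")
    case True
    then have "w @ [s] = w'' @ [e] @ concat (replicate (Suc 0) [b, s])"
      using w w' \<open>x = b\<close> by simp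
    then show ?thesis by blast
  next
    case False
    have "y \<noteq> b" using alt "1.prems"(1,2) \<open>x = b\<close> w w' by (auto simp: alternating_append)
    then have "y = s" using gen_eq_third False "1.prems"(2,4,5) by metis
    then obtain A j where "w' = A @ [e] @ concat (replicate (Suc j) [b, s])"
      using "1.IH"[rule_format, of w''] alt \<open>e \<in> set w'\<close> "1.prems"(2,4,5) w w' by (auto simp: alternating_snoc)
    moreover have "concat (replicate n [b, s]) @ [b, s] = [b, s] @ concat (replicate n [b, s])" for n
      by (induction n) auto
    ultimately have "w @ [s] = A @ [e] @ concat (replicate (Suc (Suc j)) [b, s])"
      using w \<open>x = b\<close> by (simp del: replicate.simps) (simp add: replicate_Suc)
    then show ?thesis by blast
  qed
qed

lemma alternating_descent:
  assumes "alternating b q w" "0 < inversions (next_gen b) (prev_gen b) w"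
  shows "\<exists>u v. w = u @ [next_gen b, b, prev_gen b] @ v"
  using assms
proof (induction w arbitrary: q)
  case (Cons x xs)
  show ?case
  proof (cases "0 < inversions (next_gen b) (prev_gen b) xs")
    case True
    then obtain u v where "xs = u @ [next_gen b, b, prev_gen b] @ v"
      using Cons.IH[of "\<not> q"] Cons.prems by auto
    then have "x # xs = (x # u) @ [next_gen b, b, prev_gen b] @ v" by simp
    then show ?thesis by blast
  next
    case False
    then have x: "x = next_gen b" and prev_in: "0 < count_list xs (prev_gen b)"
      using Cons.prems(2) by (auto split: if_splits)
    then obtain y zs where xs: "xs = b # y # zs" "y \<noteq> b"
      using Cons.prems(1) by (cases xs rule: remdups_adj.cases) auto
    show ?thesis
    proof (cases "y = prev_gen b")
      case True
      then show ?thesis using x xs by (intro exI[of _ "[]"] exI[of _ zs]) simp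
    next
      case False
      then have "y = next_gen b" using gen_eq_next_gen xs(2) by blast
      then show ?thesis using \<open>\<not> 0 < _\<close> prev_in xs by auto
    qed
  qed
qed simp

lemma alternating_no_inversions_canonical:
  assumes "alternating b q w" "inversions (next_gen b) (prev_gen b) w = 0"
  shows "w = canonical_word b q (count_list w (prev_gen b)) (length w)"
  using assms
proof (induction w arbitrary: q)
  case (Cons x xs)
  consider "x = b" | "x = prev_gen b" | "x = next_gen b"
    using gen_eq_next_gen by blast
  then show ?case
    using Cons by cases (auto split: if_splits)
qed simp

lemma alternating_with_prev_gen:
  assumes "alternating b q w" "w \<noteq> []"
  shows "\<exists>b' q'. alternating b' q' w \<and> prev_gen b' \<in> set w"
proof (cases "prev_gen b \<in> set w")
  case True
  then show ?thesis using assms by blast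
next
  case False
  show ?thesis
  proof (cases "b \<in> set w")
    case True
    have "alternating (next_gen b) (\<not> q) w"
      using assms(1) False by (intro alternating_other_letter) (auto dest: gen_eq_next_gen)
    then show ?thesis using True by (metis next_prev_gen(2))
  next
    case False
    then obtain x where "w = [x]"
      using assms by (cases w rule: remdups_adj.cases) auto
    then show ?thesis by (intro exI[of _ "next_gen x"] exI[of _ False]) simp
  qed
qed

lemma alternating_unique:
  assumes "alternating b q w" "prev_gen b \<in> set w" "alternating b' q' w" "prev_gen b' \<in> set w"
  shows "b = b' \<and> q = q'"
proof -
  have pos: "\<And>i. i < length w \<Longrightarrow> (w ! i = b) = (even i = q)"
    and pos': "\<And>i. i < length w \<Longrightarrow> (w ! i = b') = (even i = q')"
    using assms(1,3) unfolding alternating_iff_nth by blast+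
  obtain i where i: "i < length w" "w ! i = prev_gen b" using assms(2) by (metis in_set_conv_nth)
  obtain i' where i': "i' < length w" "w ! i' = prev_gen b'" using assms(4) by (metis in_set_conv_nth)
  show ?thesis
  proof (cases "q = q'")
    case True
    show ?thesis
    proof (cases "\<exists>j<length w. even j = q")
      case True
      then show ?thesis using pos pos' \<open>q = q'\<close> by metis
    next
      case False
      then have "length w = 1"
        using i by (metis One_nat_def less_one linorder_neqE_nat not_less_zero odd_one even_zero)
      then show ?thesis using i i' \<open>q = q'\<close> prev_gen_inject by (metis less_one)
    qed
  next
    case False
    then have letters: "\<And>j. j < length w \<Longrightarrow> w ! j = b \<or> w ! j = b'" and "b \<noteq> b'"
      using pos pos' i(1) by blast+
    then have "prev_gen b = b'" "prev_gen b' = b"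
      using letters[OF i(1)] letters[OF i'(1)] i(2) i'(2) by (metis prev_gen_neq(1))+
    then show ?thesis using prev_prev_gen_neq by metis
  qed
qed

lemma normal_coeff_nonzero_imp_pattern:
  assumes "alternating b0 q0 w" "prev_gen b0 \<in> set w" "normal_coeff t b q k w \<noteq> 0" "0 < k"
  shows "b = b0 \<and> q = q0 \<and> k = count_list w (prev_gen b0)"
proof -
  have alt: "alternating b q w" and k: "count_list w (prev_gen b) = k"
    using assms(3) by (auto simp: normal_coeff_def split: if_splits)
  then have "prev_gen b \<in> set w"
    using assms(4) count_notin by fastforce
  then show ?thesis
    using alternating_unique[OF alt _ assms(1,2)] k by auto
qed


section \<open>The ideal of \<open>M\<^sub>t\<close>\<close>

lemma fin_supp_M_rels: "g \<in> M_rels \<omega> t \<Longrightarrow> fin_supp g"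
  by (auto simp: M_rels_def fin_supp_lc)

text \<open>The squares and the binomials \<open>zxy + t yxz\<close>, \<open>xyz + t zyx\<close>, \<open>yzx + t xzy\<close> span the
  relations of \<open>M\<^sub>t\<close>.\<close>
definition kills_relations :: "complex \<Rightarrow> (gen list \<Rightarrow> complex) \<Rightarrow> bool" where
  "kills_relations t m \<longleftrightarrow> (\<forall>a. m [a, a] = 0) \<and>
     (\<forall>b. m [prev_gen b, b, next_gen b] + t * m [next_gen b, b, prev_gen b] = 0)"

lemma kills_relations_normal_coeff:
  assumes "t \<noteq> 0"
  shows "kills_relations t (\<lambda>x. normal_coeff t b q k (u @ x @ v))"
  unfolding kills_relations_def
proof (intro conjI allI)
  fix a
  show "normal_coeff t b q k (u @ [a, a] @ v) = 0"
    by (auto simp: normal_coeff_def alternating_append)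
next
  fix c
  show "normal_coeff t b q k (u @ [prev_gen c, c, next_gen c] @ v)
      + t * normal_coeff t b q k (u @ [next_gen c, c, prev_gen c] @ v) = 0"
    using assms
    by (cases b; cases c) (auto simp: normal_coeff_def alternating_append inversions_append power_add field_simps)
qed

locale M_relations =
  fixes \<omega> t :: complex
  assumes omega_cube: "\<omega> ^ 3 = 1" and omega_neq_1: "\<omega> \<noteq> 1" and t_nonzero: "t \<noteq> 0"
begin

abbreviation \<I> :: "ncpoly set" where
  "\<I> \<equiv> ideal_gen (M_rels \<omega> t)"

lemma omega_square: "\<omega>^2 = - 1 - \<omega>"
proof -
  have "(\<omega> - 1) * (1 + \<omega> + \<omega>^2) = \<omega>^3 - 1"
    by (simp add: algebra_simps power2_eq_square power3_eq_cube)
  then have "1 + \<omega> + \<omega>^2 = 0" using omega_cube omega_neq_1 by simp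
  then show ?thesis by (simp add: eq_neg_iff_add_eq_0 algebra_simps)
qed

lemma pairing_M_rels_eq_0:
  assumes "kills_relations t m" "g \<in> M_rels \<omega> t"
  shows "pairing m g = 0"
proof -
  have "m [a, a] = 0" for a
    using assms(1) by (simp add: kills_relations_def)
  moreover have "m [Z,X,Y] = - t * m [Y,X,Z]" "m [X,Y,Z] = - t * m [Z,Y,X]"
    "m [Y,Z,X] = - t * m [X,Z,Y]"
    using assms(1) unfolding kills_relations_def
    by (metis add_eq_0_iff2 mult_minus_left next_gen.simps prev_gen.simps)+
  ultimately show ?thesis
    using assms(2) unfolding M_rels_def by (auto simp: pairing_lc omega_square algebra_simps)
qed

lemma pairing_ideal_eq_0:
  assumes "\<And>u v. kills_relations t (\<lambda>x. l (u @ x @ v))" "p \<in> \<I>"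
  shows "pairing l p = 0"
  using assms(2)
proof (induction p rule: ideal_gen.induct)
  case (gen g a b)
  have g: "fin_supp g" using gen(1) by (rule fin_supp_M_rels)
  then have ag: "fin_supp (ncmul a g)" using gen(2) by (simp add: fin_supp_ncmul)
  have "pairing l (ncmul (ncmul a g) b)
      = (\<Sum>v\<in>supp b. b v * (\<Sum>u\<in>supp a. a u * pairing (\<lambda>x. l (u @ x @ v)) g))"
    by (simp add: pairing_ncmul_right[OF ag gen(3)] pairing_ncmul_left[OF gen(2) g])
  also have "\<dots> = 0"
    using pairing_M_rels_eq_0[OF assms(1) gen(1)] by simp
  finally show ?case .
next
  case (add p q)
  have "fin_supp p" "fin_supp q"
    using add(1,2) by (auto intro: ideal_gen_fin_supp fin_supp_M_rels)
  with add show ?case by (simp add: pairing_ncadd)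
qed simp

lemma square_in_ideal: "mon (u @ [a, a] @ v) \<in> \<I>"
proof -
  have "mon [a, a] \<in> M_rels \<omega> t"
    by (cases a) (auto simp: M_rels_def lc_def mon_def fun_eq_iff)
  then show ?thesis
    unfolding mon_append_eq_sandwich by (rule sandwich_in_ideal_gen)
qed

text \<open>Since \<open>1 + \<omega> + \<omega>\<^sup>2 = 0\<close>, one third of the sum of the three cubic relations,
  twisted by suitable powers of \<open>\<omega>\<close>, is a single binomial.\<close>
lemma binomial_in_ideal:
  "(\<lambda>x. mon (u @ [prev_gen b, b, next_gen b] @ v) x + t * mon (u @ [next_gen b, b, prev_gen b] @ v) x)
    \<in> \<I>"
proof -
  let ?r1 = "lc [(1, [Z,X,Y]), (\<omega>, [X,Y,Z]), (\<omega>^2, [Y,Z,X]),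
         (t, [Y,X,Z]), (t * \<omega>, [Z,Y,X]), (t * \<omega>^2, [X,Z,Y])]"
  let ?r2 = "lc [(1, [Z,X,Y]), (\<omega>^2, [X,Y,Z]), (\<omega>, [Y,Z,X]),
         (t, [Y,X,Z]), (t * \<omega>^2, [Z,Y,X]), (t * \<omega>, [X,Z,Y])]"
  let ?r3 = "lc [(1, [Z,X,Y]), (1, [X,Y,Z]), (1, [Y,Z,X]),
         (t, [Y,X,Z]), (t, [Z,Y,X]), (t, [X,Z,Y])]"
  define h where "h = (\<lambda>m. 1 * mon [prev_gen b, b, next_gen b] m + t * mon [next_gen b, b, prev_gen b] m)"
  have o1: "\<omega> * \<omega> = - 1 - \<omega>"
    using omega_square by (simp add: power2_eq_square)
  have o2: "\<omega> * (\<omega> * x) = - x - \<omega> * x" for x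
    by (simp only: mult.assoc[symmetric] o1) (simp add: algebra_simps)
  have "\<exists>c1 c2 c3. \<forall>m. h m = c1 * ?r1 m + c2 * ?r2 m + c3 * ?r3 m"
  proof (cases b)
    case X
    have "h m = 1/3 * ?r1 m + 1/3 * ?r2 m + 1/3 * ?r3 m" for m
      by (auto simp: h_def X mon_def lc_def omega_square o1 o2 field_simps)
    then show ?thesis by blast
  next
    case Y
    have "h m = \<omega>^2/3 * ?r1 m + \<omega>/3 * ?r2 m + 1/3 * ?r3 m" for m
      by (auto simp: h_def Y mon_def lc_def omega_square o1 o2 field_simps)
    then show ?thesis by blast
  next
    case Z
    have "h m = \<omega>/3 * ?r1 m + \<omega>^2/3 * ?r2 m + 1/3 * ?r3 m" for m
      by (auto simp: h_def Z mon_def lc_def omega_square o1 o2 field_simps)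
    then show ?thesis by blast
  qed
  then obtain c1 c2 c3 where h: "h = (\<lambda>m. c1 * ?r1 m + c2 * ?r2 m + c3 * ?r3 m)"
    by blast
  have "?r1 \<in> M_rels \<omega> t" "?r2 \<in> M_rels \<omega> t" "?r3 \<in> M_rels \<omega> t"
    by (auto simp: M_rels_def)
  then have "sandwich u h v \<in> \<I>"
    unfolding h by (rule sandwich_lincomb3_in_ideal_gen)
  then show ?thesis
    unfolding h_def sandwich_lincomb mon_append_eq_sandwich by simp
qed

lemma swap_in_ideal_iff:
  assumes "e \<noteq> b" "s \<noteq> b" "e \<noteq> s"
  shows "mon (A @ [e, b, s] @ B) \<in> \<I> \<longleftrightarrow> mon (A @ [s, b, e] @ B) \<in> \<I>"
  using gen_distinct_cases[OF assms]
    ideal_gen_binomial_iff[OF binomial_in_ideal t_nonzero, of A b B]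
  by auto

lemma letter_returns_after_run_in_ideal:
  assumes "e \<noteq> b" "s \<noteq> b" "e \<noteq> s"
  shows "mon (A @ [e] @ concat (replicate (Suc j) [b, s]) @ [e] @ y) \<in> \<I>"
proof (induction j arbitrary: A)
  case 0
  have "mon ((A @ [s, b]) @ [e, e] @ y) \<in> \<I>"
    by (rule square_in_ideal)
  then show ?case
    using swap_in_ideal_iff[OF assms, of A "e # y"] by simp
next
  case (Suc j)
  have "mon ((A @ [s, b]) @ [e] @ concat (replicate (Suc j) [b, s]) @ [e] @ y) \<in> \<I>"
    by (rule Suc.IH)
  then show ?case
    using swap_in_ideal_iff[OF assms, of A "concat (replicate (Suc j) [b, s]) @ [e] @ y"] by simp
qed


section \<open>Normal forms modulo the ideal\<close>

lemma alternating_snoc_or_vanishing: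
  assumes alt: "alternating b q w"
  shows "(\<exists>b' q'. alternating b' q' (w @ [e])) \<or> (\<forall>y. mon (w @ e # y) \<in> \<I>)"
proof (cases "alternating b q (w @ [e])")
  case True
  then show ?thesis by blast
next
  case misfit: False
  show ?thesis
  proof (cases w rule: rev_cases)
    case Nil
    then have "alternating e True (w @ [e])" by simp
    then show ?thesis by blast
  next
    case (snoc w' x)
    have pos_e: "(e = b) \<noteq> (even (length w) = q)"
      using alt misfit by (simp add: alternating_snoc)
    have pos_x: "(x = b) = (even (length w') = q)"
      using alt unfolding snoc by (simp add: alternating_snoc)
    consider "e = x" | "e \<noteq> x" "e \<noteq> b" "x \<noteq> b" "even (length w) = q"
      using pos_x pos_e snoc by auto
    then show ?thesis
    proof cases
      case 1
      have "mon (w' @ [e, e] @ y) \<in> \<I>" for y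
        by (rule square_in_ideal)
      then show ?thesis using snoc 1 by simp
    next
      case 2
      show ?thesis
      proof (cases "e \<in> set w")
        case True
        then have "e \<in> set w'" using 2 snoc by auto
        then obtain A j where "w = A @ [e] @ concat (replicate (Suc j) [b, x])"
          using alternating_ends_with_run[of b q w' x e] alt snoc 2 by auto
        then show ?thesis using letter_returns_after_run_in_ideal[of e b x] 2 by auto
      next
        case False
        then have "set w \<subseteq> {b, x}" using 2 gen_eq_third by blast
        then have "alternating x (\<not> q) w"
          using alternating_other_letter[OF alt] 2 by blast
        then have "alternating x (\<not> q) (w @ [e])"
          using 2 by (simp add: alternating_snoc)
        then show ?thesis by blast
      qed
    qed
  qed
qed

lemma alternating_or_vanishing: "(\<exists>b q. alternating b q w) \<or> (\<forall>y. mon (w @ y) \<in> \<I>)"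
proof (induction w rule: rev_induct)
  case Nil
  have "alternating X True []" by simp
  then show ?case by blast
next
  case (snoc e w)
  then show ?case
    using alternating_snoc_or_vanishing[of _ _ w e] by auto
qed

lemma mon_alternating_eq_canonical:
  assumes "alternating b q w"
  shows "(\<lambda>x. mon w x - (- 1 / t) ^ inversions (next_gen b) (prev_gen b) w
      * mon (canonical_word b q (count_list w (prev_gen b)) (length w)) x) \<in> \<I>"
  using assms
proof (induction "inversions (next_gen b) (prev_gen b) w" arbitrary: w)
  case 0
  then have "canonical_word b q (count_list w (prev_gen b)) (length w) = w"
    by (metis alternating_no_inversions_canonical)
  then show ?case
    using ideal_gen.zero by (simp add: "0.hyps"[symmetric])
next
  case (Suc m)
  obtain u v where w: "w = u @ [next_gen b, b, prev_gen b] @ v"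
    using alternating_descent Suc.prems Suc.hyps(2) by (metis zero_less_Suc)
  define w' where "w' = u @ [prev_gen b, b, next_gen b] @ v"
  let ?c = "canonical_word b q (count_list w (prev_gen b)) (length w)"
  have "alternating b q w'"
    using Suc.prems by (auto simp: w w'_def alternating_append)
  moreover have "inversions (next_gen b) (prev_gen b) w' = m"
    using Suc.hyps(2) by (simp add: w w'_def inversions_append)
  moreover have "count_list w' (prev_gen b) = count_list w (prev_gen b)" "length w' = length w"
    by (simp_all add: w w'_def)
  ultimately have IH: "(\<lambda>x. mon w' x - (- 1 / t) ^ m * mon ?c x) \<in> \<I>"
    using Suc.hyps(1)[of w'] by simp
  have "(\<lambda>x. mon w' x + t * mon w x) \<in> \<I>"
    using binomial_in_ideal[of u b v] by (simp add: w w'_def)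
  from ideal_gen_lincomb[OF this IH, of "1 / t" "- 1 / t"]
  moreover have "(\<lambda>x. 1 / t * (mon w' x + t * mon w x) + - 1 / t * (mon w' x - (- 1 / t) ^ m * mon ?c x))
      = (\<lambda>x. mon w x - (- 1 / t) ^ Suc m * mon ?c x)"
    using t_nonzero by (simp add: fun_eq_iff field_simps)
  ultimately have "(\<lambda>x. mon w x - (- 1 / t) ^ Suc m * mon ?c x) \<in> \<I>"
    by simp
  then show ?case by (simp only: Suc.hyps(2))
qed

text \<open>The index set excludes \<open>k = 0\<close> on purpose: a word avoiding \<open>prev_gen b\<close> also alternates
  for \<open>next_gen b\<close>, and with \<open>k \<ge> 1\<close> every alternating word matches exactly one triple.\<close>
lemma mon_eq_normal_form:
  assumes "w \<noteq> []"
  shows "(\<lambda>x. mon w x - (\<Sum>(b, q, k)\<in>UNIV \<times> UNIV \<times> {1..length w}.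
      normal_coeff t b q k w * mon (canonical_word b q k (length w)) x)) \<in> \<I>"
proof (cases "\<exists>b q. alternating b q w")
  case False
  then have "mon w \<in> \<I>"
    using alternating_or_vanishing[of w] by (metis append_Nil2)
  moreover have "normal_coeff t b q k w = 0" for b q k
    using False by (simp add: normal_coeff_def)
  ultimately show ?thesis by (simp add: case_prod_beta)
next
  case True
  then obtain b0 q0 where alt: "alternating b0 q0 w" and prev: "prev_gen b0 \<in> set w"
    using alternating_with_prev_gen assms by blast
  define k0 where "k0 = count_list w (prev_gen b0)"
  have k0: "k0 \<in> {1..length w}"
    using prev count_list_0_iff[of w "prev_gen b0"] by (auto simp: k0_def count_le_length)
  have "(\<Sum>(b, q, k)\<in>UNIV \<times> UNIV \<times> {1..length w}.
        normal_coeff t b q k w * mon (canonical_word b q k (length w)) x)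
      = normal_coeff t b0 q0 k0 w * mon (canonical_word b0 q0 k0 (length w)) x" for x
    by (subst sum.mono_neutral_right[where S = "{(b0, q0, k0)}"])
      (use k0 in \<open>auto dest: normal_coeff_nonzero_imp_pattern[OF alt prev] simp: k0_def Suc_le_eq\<close>)
  moreover have "normal_coeff t b0 q0 k0 w = (- 1 / t) ^ inversions (next_gen b0) (prev_gen b0) w"
    using alt by (simp add: normal_coeff_def k0_def)
  ultimately show ?thesis
    using mon_alternating_eq_canonical[OF alt] by (simp add: k0_def)
qed


section \<open>Central elements of odd degree\<close>

lemma central_pairing_shift:
  assumes "central_mod \<I> f" "fin_supp f" "\<And>u v. kills_relations t (\<lambda>x. l (u @ x @ v))"
  shows "pairing (\<lambda>u. l (u @ [e])) f = pairing (\<lambda>v. l (e # v)) f"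
proof -
  have "ncdiff (ncmul f (mon [e])) (ncmul (mon [e]) f) \<in> \<I>"
    using assms(1) fin_supp_mon unfolding central_mod_def by blast
  then have "pairing l (ncdiff (ncmul f (mon [e])) (ncmul (mon [e]) f)) = 0"
    using pairing_ideal_eq_0[OF assms(3)] by blast
  then show ?thesis
    using assms(2) by (simp add: pairing_ncdiff fin_supp_ncmul fin_supp_mon
        pairing_ncmul_letter_right pairing_ncmul_letter_left)
qed

lemma pairing_normal_coeff_eq_0:
  assumes "odd n" "homogeneous n f" "central_mod \<I> f"
  shows "pairing (normal_coeff t b q k) f = 0"
proof -
  have f: "fin_supp f" and len: "\<And>w. w \<in> supp f \<Longrightarrow> length w = n"
    using assms(2) by (auto simp: homogeneous_def supp_def)
  have shift: "pairing (\<lambda>u. normal_coeff t b True k (u @ [e])) f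
      = pairing (\<lambda>v. normal_coeff t b True k (e # v)) f" for e
    using central_pairing_shift[OF assms(3) f kills_relations_normal_coeff[OF t_nonzero]] .
  show ?thesis
  proof (cases q)
    case False
    have "pairing (\<lambda>u. normal_coeff t b True k (u @ [b])) f = pairing (\<lambda>_. 0) f"
      by (rule pairing_cong) (use len assms(1) in \<open>auto simp: normal_coeff_def alternating_snoc\<close>)
    moreover have "pairing (\<lambda>v. normal_coeff t b True k (b # v)) f = pairing (normal_coeff t b False k) f"
      by (rule pairing_cong) (simp add: normal_coeff_def)
    ultimately show ?thesis using shift[of b] False by (simp add: pairing_def)
  next
    case True
    have "pairing (\<lambda>u. normal_coeff t b True k (u @ [next_gen b])) f = pairing (normal_coeff t b True k) f"
      by (rule pairing_cong)
        (use len assms(1) in \<open>auto simp: normal_coeff_def alternating_snoc inversions_append\<close>)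
    moreover have "pairing (\<lambda>v. normal_coeff t b True k (next_gen b # v)) f = pairing (\<lambda>_. 0) f"
      by (rule pairing_cong) (simp add: normal_coeff_def)
    ultimately show ?thesis using shift[of "next_gen b"] True by (simp add: pairing_def)
  qed
qed

lemma homogeneous_in_ideal_if_normal_coeffs_vanish:
  assumes "homogeneous n f" "0 < n" "\<And>b q k. pairing (normal_coeff t b q k) f = 0"
  shows "f \<in> \<I>"
proof -
  let ?P = "UNIV \<times> UNIV \<times> {1..n}"
  let ?N = "\<lambda>w x. \<Sum>(b, q, k)\<in>?P. normal_coeff t b q k w * mon (canonical_word b q k n) x"
  have f: "fin_supp f" and len: "\<And>w. w \<in> supp f \<Longrightarrow> length w = n"
    using assms(1) by (auto simp: homogeneous_def supp_def)
  have "(\<lambda>x. mon w x - ?N w x) \<in> \<I>" if "w \<in> supp f" for w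
    using mon_eq_normal_form[of w] len[OF that] assms(2) by auto
  then have "(\<lambda>x. \<Sum>w\<in>supp f. f w * (mon w x - ?N w x)) \<in> \<I>"
    using f by (intro ideal_gen_sum ideal_gen_smult) (auto simp: fin_supp_iff_finite_supp)
  moreover have "(\<Sum>w\<in>supp f. f w * ?N w x) = 0" for x
  proof -
    have "(\<Sum>w\<in>supp f. f w * ?N w x)
        = (\<Sum>(b, q, k)\<in>?P. pairing (normal_coeff t b q k) f * mon (canonical_word b q k n) x)"
      by (simp add: pairing_def sum_distrib_left sum_distrib_right case_prod_beta mult_ac
          sum.swap[of _ "supp f"])
    then show ?thesis by (simp add: assms(3))
  qed
  ultimately show ?thesis
    using sum_mon_eq[OF f] by (simp add: right_diff_distrib sum_subtractf)
qed

end

theorem mainTheorem11: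
  fixes \<omega> t :: complex
  assumes "\<omega> ^ 3 = 1" and "\<omega> \<noteq> 1" and "t \<noteq> 0"
  shows "\<forall>d f. odd d \<and> homogeneous d f \<and> central_mod (M_ideal \<omega> t) f
           \<longrightarrow> f \<in> M_ideal \<omega> t"
proof (intro allI impI, elim conjE)
  fix d f
  assume "odd d" "homogeneous d f" "central_mod (M_ideal \<omega> t) f"
  interpret M_relations \<omega> t
    using assms by unfold_locales
  have "0 < d" using \<open>odd d\<close> by (cases d) auto
  then show "f \<in> M_ideal \<omega> t"
    using homogeneous_in_ideal_if_normal_coeffs_vanish pairing_normal_coeff_eq_0
      \<open>odd d\<close> \<open>homogeneous d f\<close> \<open>central_mod (M_ideal \<omega> t) f\<close>
    unfolding M_ideal_def by blast
qed

end
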